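(* Let ${\cal P}={\cal P}_{in}\cup{\cal P}_{out}$, let $\gamma$ be an assumption formula, let $D$ be a flagging monitor over $2^{{\cal P}_{in}}$, and let $\pi=\gamma\rightarrow\pi'$ where either $\pi'=D{:}\phi$ with $\phi$ an LTL formula (simple trigger), or $\pi'=(D;\varphi)^*$ with $\varphi$ a co-safety LTL formula (repeating trigger). Let $t(\pi)$ denote $\gamma\rightarrow\phi$ in the first case and $\gamma\rightarrow\varphi$ in the second. Let $C_{t(\pi)}$ be a Mealy machine that realises $t(\pi)$ in the simple-trigger case, and that tightly realises $t(\pi)$ in the repeating-trigger case. Then there is a Mealy machine (built from $D$ and $C_{t(\pi)}$) that realises $\pi$.
   Context: Traces $\sigma=\sigma_0\sigma_1\cdots$ have letters $\sigma_i\subseteq{\cal P}$; $\sigma_{i,j}=\sigma_i\cdots\sigma_j$, $\sigma_{i,\infty}$ the suffix from $i$. LTL: $\phi ::= \mathit{tt}\mid\mathit{ff}\mid e\mid\neg e\mid\phi\wedge\phi\mid\phi\vee\phi\mid X\phi\mid\phi U\phi\mid G\phi$, standard infinite-trace semantics; co-safety: no $G$. Finite semantics of co-safety formulas on $\sigma_{i,j}$ ($j<\infty$): atoms/Booleans at position $i$; $X\varphi$ iff $j>i$ and $\sigma_{i+1,j}\vdash\varphi$; $\varphi U\psi$ iff some $l\in[i,j]$ has $\sigma_{l,j}\vdash\psi$ and $\sigma_{k,j}\vdash\varphi$ for $k\in[i,l)$. Tight satisfaction $\sigma_{i,j}\Vdash\varphi$: $\sigma_{i,j}\vdash\varphi$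 and $\sigma_{i,k}\not\vdash\varphi$ for all $i\le k<j$. Assumptions: $\alpha ::= \mathit{tt}\mid\mathit{ff}\mid a\mid\neg\alpha\mid\alpha\wedge\alpha\mid\alpha\vee\alpha$; $\beta ::= \alpha\mid X\alpha\mid\beta\wedge\beta\mid\beta\vee\beta$; $\gamma ::= G\beta\mid GF\alpha\mid\gamma\wedge\gamma$. Flagging monitor over $\Sigma=2^{{\cal P}_{in}}$: $D=\langle \Sigma, \mathbb{V}, \Theta, Q, \theta_0, q_0, F, \perp, \rightarrow\rangle$ with typed variables $\mathbb{V}$ (arbitrary domains), valuations $\Theta$, finite states $Q$, initial valuation $\theta_0$, initial state $q_0$, flagging states $F\subseteq Q\setminus\{q_0\}$, sink $\perp$, deterministic transitions $q\xrightarrow{g\mapsto a}q'$ ($q\ne\perp$), guards $g:\Sigma\times\Theta\to\{\mathit{true},\mathit{false}\}$, actions $a:\Sigma\times\Theta\to\Theta$. Semantics on $(q,\theta)$ reading $E$: (1) if $q\notin F\cup\{\perp\}$ and a transition from $q$ has true guard, take it and set the valuation to $a(E,\theta)$; (2) if $q\notin F\cup\{\perp\}$ and no guard holds, stay; (3) $\perp$ stays; (4) a state in $F$ moves to $\perp$. On traces over $2^{\cal P}$ the monitor reads $\sigma_i\cap{\cal P}_{in}$. $\sigma_{i,j}\Vdash D$ iff the run from $(q_0,\theta_0)$ on $\sigma_i,\dots,\sigma_j$ ends in $F$. Semantics of triggers: $\sigma_{i,\infty}\vdash D{:}\phi$ iff for all $j\ge i$, $\sigma_{i,j}\Vdash D$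 implies $\sigma_{j,\infty}\vdash\phi$. $\sigma_{i,k}\vdash D;\varphi$ iff some $j\in[i,k]$ has $\sigma_{i,j}\Vdash D$ and $\sigma_{j,k}\Vdash\varphi$. Restart points: $0$ is one; if $p$ is one and $\sigma_{p,k}\vdash D;\varphi$ then $k+1$ is one. $\sigma\vdash(D;\varphi)^*$ iff for every restart point $p$ and every $i\ge p$ with $\sigma_{p,i}\Vdash D$ there is $k\ge i$ with $\sigma_{p,k}\vdash D;\varphi$. $\sigma\vdash\gamma\rightarrow\pi'$ iff $\sigma\vdash\gamma$ implies $\sigma_{0,\infty}\vdash\pi'$. Mealy machine: $C=\langle S,s_0,2^{{\cal P}_{in}},2^{{\cal P}_{out}},\rightarrow,F\rangle$, complete deterministic $\rightarrow:S\times2^{{\cal P}_{in}}\to2^{{\cal P}_{out}}\times S$, accepting states $F$. A run $s_0s_1\cdots$ with $s_i\xrightarrow{I_i/O_i}s_{i+1}$ produces $w$ with $w_i=I_i\cup O_i$; $C$ accepts a prefix $u$ if $s_{|u|}\in F$. $C$ realises a formula if every produced word satisfies it. $C$ tightly realises $\gamma\rightarrow\varphi$ ($\varphi$ co-safety) if it realises it and for each produced $w$ with $w\vdash\gamma$ there is a prefix $u$ of $w$ accepted by $C$, tightly satisfying $\varphi$, with no strict prefix of $u$ accepted by $C$. *)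

theory Defs
  imports Main
begin

type_synonym 'p trace = "nat \<Rightarrow> 'p set"

datatype 'p ltl = TT | FF | Prop 'p | NProp 'p
  | And "'p ltl" "'p ltl" | Or "'p ltl" "'p ltl"
  | Next "'p ltl" | Until "'p ltl" "'p ltl" | Glob "'p ltl"

fun sat :: "'p trace \<Rightarrow> nat \<Rightarrow> 'p ltl \<Rightarrow> bool" where
  "sat s i TT = True"
| "sat s i FF = False"
| "sat s i (Prop e) = (e \<in> s i)"
| "sat s i (NProp e) = (e \<notin> s i)"
| "sat s i (And f g) = (sat s i f \<and> sat s i g)"
| "sat s i (Or f g) = (sat s i f \<or> sat s i g)"
| "sat s i (Next f) = sat s (Suc i) f"
| "sat s i (Until f g) = (\<exists>l\<ge>i. sat s l g \<and> (\<forall>k. i \<le> k \<and> k < l \<longrightarrow> sat s k f))"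
| "sat s i (Glob f) = (\<forall>k\<ge>i. sat s k f)"

fun cosafety :: "'p ltl \<Rightarrow> bool" where
  "cosafety (And f g) = (cosafety f \<and> cosafety g)"
| "cosafety (Or f g) = (cosafety f \<and> cosafety g)"
| "cosafety (Next f) = cosafety f"
| "cosafety (Until f g) = (cosafety f \<and> cosafety g)"
| "cosafety (Glob f) = False"
| "cosafety _ = True"

text \<open>Finite semantics on the segment s_i..s_j (only meaningful for co-safety formulas;
  G is outside the fragment and is given the value False).\<close>
fun fsat :: "'p trace \<Rightarrow> nat \<Rightarrow> nat \<Rightarrow> 'p ltl \<Rightarrow> bool" where
  "fsat s i j TT = True"
| "fsat s i j FF = False"
| "fsat s i j (Prop e) = (e \<in> s i)"
| "fsat s i j (NProp e) = (e \<notin> s i)"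
| "fsat s i j (And f g) = (fsat s i j f \<and> fsat s i j g)"
| "fsat s i j (Or f g) = (fsat s i j f \<or> fsat s i j g)"
| "fsat s i j (Next f) = (j > i \<and> fsat s (Suc i) j f)"
| "fsat s i j (Until f g) =
     (\<exists>l. i \<le> l \<and> l \<le> j \<and> fsat s l j g \<and> (\<forall>k. i \<le> k \<and> k < l \<longrightarrow> fsat s k j f))"
| "fsat s i j (Glob f) = False"

definition tsat :: "'p trace \<Rightarrow> nat \<Rightarrow> nat \<Rightarrow> 'p ltl \<Rightarrow> bool" where
  "tsat s i j f \<longleftrightarrow> i \<le> j \<and> fsat s i j f \<and> (\<forall>k. i \<le> k \<and> k < j \<longrightarrow> \<not> fsat s i k f)"

datatype 'p aprop = ATT | AFF | AAt 'p | ANot "'p aprop"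
  | AAnd "'p aprop" "'p aprop" | AOr "'p aprop" "'p aprop"

datatype 'p abeta = BProp "'p aprop" | BNext "'p aprop"
  | BAnd "'p abeta" "'p abeta" | BOr "'p abeta" "'p abeta"

datatype 'p agamma = GAlw "'p abeta" | GInf "'p aprop" | GAnd "'p agamma" "'p agamma"

fun asat :: "'p set \<Rightarrow> 'p aprop \<Rightarrow> bool" where
  "asat E ATT = True"
| "asat E AFF = False"
| "asat E (AAt a) = (a \<in> E)"
| "asat E (ANot f) = (\<not> asat E f)"
| "asat E (AAnd f g) = (asat E f \<and> asat E g)"
| "asat E (AOr f g) = (asat E f \<or> asat E g)"

fun bsat :: "'p trace \<Rightarrow> nat \<Rightarrow> 'p abeta \<Rightarrow> bool" where
  "bsat s i (BProp a) = asat (s i) a"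
| "bsat s i (BNext a) = asat (s (Suc i)) a"
| "bsat s i (BAnd f g) = (bsat s i f \<and> bsat s i g)"
| "bsat s i (BOr f g) = (bsat s i f \<or> bsat s i g)"

fun gsat :: "'p trace \<Rightarrow> 'p agamma \<Rightarrow> bool" where
  "gsat s (GAlw b) = (\<forall>i. bsat s i b)"
| "gsat s (GInf a) = (\<forall>i. \<exists>j\<ge>i. asat (s j) a)"
| "gsat s (GAnd f g) = (gsat s f \<and> gsat s g)"

fun aatoms :: "'p aprop \<Rightarrow> 'p set" where
  "aatoms (AAt a) = {a}"
| "aatoms (ANot f) = aatoms f"
| "aatoms (AAnd f g) = aatoms f \<union> aatoms g"
| "aatoms (AOr f g) = aatoms f \<union> aatoms g"
| "aatoms _ = {}"

fun batoms :: "'p abeta \<Rightarrow> 'p set" where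
  "batoms (BProp a) = aatoms a"
| "batoms (BNext a) = aatoms a"
| "batoms (BAnd f g) = batoms f \<union> batoms g"
| "batoms (BOr f g) = batoms f \<union> batoms g"

fun gatoms :: "'p agamma \<Rightarrow> 'p set" where
  "gatoms (GAlw b) = batoms b"
| "gatoms (GInf a) = aatoms a"
| "gatoms (GAnd f g) = gatoms f \<union> gatoms g"

text \<open>A transition (q, g, a, q') goes from q to q' with guard g and action a.
  Guards and actions take the letter (a subset of P_in) and the current valuation.\<close>
record ('q, 'v, 'p) monitor =
  mQ :: "'q set"
  mq0 :: 'q
  mth0 :: 'v
  mF :: "'q set"
  mbot :: 'q
  mtrans :: "('q \<times> ('p set \<Rightarrow> 'v \<Rightarrow> bool) \<times> ('p set \<Rightarrow> 'v \<Rightarrow> 'v) \<times> 'q) set"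

definition wf_monitor :: "'p set \<Rightarrow> ('q, 'v, 'p) monitor \<Rightarrow> bool" where
  "wf_monitor Pin D \<longleftrightarrow>
     finite (mQ D) \<and> mq0 D \<in> mQ D \<and> mbot D \<in> mQ D \<and>
     mF D \<subseteq> mQ D - {mq0 D} \<and> mbot D \<notin> mF D \<and>
     (\<forall>(q, g, a, q') \<in> mtrans D. q \<in> mQ D \<and> q' \<in> mQ D \<and> q \<noteq> mbot D) \<and>
     (\<forall>q E th t1 t2. E \<subseteq> Pin \<longrightarrow> t1 \<in> mtrans D \<longrightarrow> t2 \<in> mtrans D \<longrightarrow>
        fst t1 = q \<longrightarrow> fst t2 = q \<longrightarrow>
        fst (snd t1) E th \<longrightarrow> fst (snd t2) E th \<longrightarrow> t1 = t2)"

definition enabled :: "('q, 'v, 'p) monitor \<Rightarrow> 'q \<Rightarrow> 'p set \<Rightarrow> 'v \<Rightarrow>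
    ('q \<times> ('p set \<Rightarrow> 'v \<Rightarrow> bool) \<times> ('p set \<Rightarrow> 'v \<Rightarrow> 'v) \<times> 'q) \<Rightarrow> bool" where
  "enabled D q E th t \<longleftrightarrow> t \<in> mtrans D \<and> fst t = q \<and> fst (snd t) E th"

definition mstep :: "('q, 'v, 'p) monitor \<Rightarrow> 'p set \<Rightarrow> 'q \<times> 'v \<Rightarrow> 'q \<times> 'v" where
  "mstep D E c = (case c of (q, th) \<Rightarrow>
     if q = mbot D then (q, th)
     else if q \<in> mF D then (mbot D, th)
     else if (\<exists>t. enabled D q E th t) then
       (let t = (THE t. enabled D q E th t) in (snd (snd (snd t)), fst (snd (snd t)) E th))
     else (q, th))"

fun mconf :: "'p set \<Rightarrow> ('q, 'v, 'p) monitor \<Rightarrow> 'p trace \<Rightarrow> nat \<Rightarrow> nat \<Rightarrow> 'q \<times> 'v" where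
  "mconf Pin D s i 0 = (mq0 D, mth0 D)"
| "mconf Pin D s i (Suc n) = mstep D (s (i + n) \<inter> Pin) (mconf Pin D s i n)"

definition mflag :: "'p set \<Rightarrow> ('q, 'v, 'p) monitor \<Rightarrow> 'p trace \<Rightarrow> nat \<Rightarrow> nat \<Rightarrow> bool" where
  "mflag Pin D s i j \<longleftrightarrow> i \<le> j \<and> fst (mconf Pin D s i (Suc (j - i))) \<in> mF D"

definition trig_sat :: "'p set \<Rightarrow> ('q, 'v, 'p) monitor \<Rightarrow> 'p ltl \<Rightarrow> 'p trace \<Rightarrow> nat \<Rightarrow> bool" where
  "trig_sat Pin D f s i \<longleftrightarrow> (\<forall>j\<ge>i. mflag Pin D s i j \<longrightarrow> sat s j f)"

definition dseq :: "'p set \<Rightarrow> ('q, 'v, 'p) monitor \<Rightarrow> 'p ltl \<Rightarrow> 'p trace \<Rightarrow> nat \<Rightarrow> nat \<Rightarrow> bool" where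
  "dseq Pin D f s i k \<longleftrightarrow> (\<exists>j. i \<le> j \<and> j \<le> k \<and> mflag Pin D s i j \<and> tsat s j k f)"

inductive restart :: "'p set \<Rightarrow> ('q, 'v, 'p) monitor \<Rightarrow> 'p ltl \<Rightarrow> 'p trace \<Rightarrow> nat \<Rightarrow> bool"
  for Pin D f s where
  restart0: "restart Pin D f s 0"
| restartS: "restart Pin D f s p \<Longrightarrow> dseq Pin D f s p k \<Longrightarrow> restart Pin D f s (Suc k)"

definition rep_sat :: "'p set \<Rightarrow> ('q, 'v, 'p) monitor \<Rightarrow> 'p ltl \<Rightarrow> 'p trace \<Rightarrow> bool" where
  "rep_sat Pin D f s \<longleftrightarrow>
     (\<forall>p i. restart Pin D f s p \<longrightarrow> p \<le> i \<longrightarrow> mflag Pin D s p i \<longrightarrow>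
        (\<exists>k\<ge>i. dseq Pin D f s p k))"

text \<open>States are the elements of the state type; the transition function is total
  (complete and deterministic).\<close>
record ('s, 'p) mealy =
  ms0 :: 's
  mdelta :: "'s \<Rightarrow> 'p set \<Rightarrow> 'p set \<times> 's"
  macc :: "'s set"

definition wf_mealy :: "'p set \<Rightarrow> 'p set \<Rightarrow> ('s, 'p) mealy \<Rightarrow> bool" where
  "wf_mealy Pin Pout C \<longleftrightarrow> (\<forall>s I. I \<subseteq> Pin \<longrightarrow> fst (mdelta C s I) \<subseteq> Pout)"

fun mstates :: "('s, 'p) mealy \<Rightarrow> 'p trace \<Rightarrow> nat \<Rightarrow> 's" where
  "mstates C I 0 = ms0 C"
| "mstates C I (Suc n) = snd (mdelta C (mstates C I n) (I n))"

definition mword :: "('s, 'p) mealy \<Rightarrow> 'p trace \<Rightarrow> 'p trace" where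
  "mword C I n = I n \<union> fst (mdelta C (mstates C I n) (I n))"

definition realises :: "'p set \<Rightarrow> ('s, 'p) mealy \<Rightarrow> ('p trace \<Rightarrow> bool) \<Rightarrow> bool" where
  "realises Pin C P \<longleftrightarrow> (\<forall>I. (\<forall>n. I n \<subseteq> Pin) \<longrightarrow> P (mword C I))"

text \<open>Tight realisation of gamma -> phi: the accepted prefix is w_0..w_n (states s_(n+1)),
  and no strict prefix (lengths 0..n, i.e. states s_0..s_n) is accepted.\<close>
definition tightly_realises :: "'p set \<Rightarrow> ('s, 'p) mealy \<Rightarrow> 'p agamma \<Rightarrow> 'p ltl \<Rightarrow> bool" where
  "tightly_realises Pin C g f \<longleftrightarrow>
     realises Pin C (\<lambda>w. gsat w g \<longrightarrow> sat w 0 f) \<and>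
     (\<forall>I. (\<forall>n. I n \<subseteq> Pin) \<longrightarrow> gsat (mword C I) g \<longrightarrow>
        (\<exists>n. mstates C I (Suc n) \<in> macc C \<and> tsat (mword C I) 0 n f \<and>
             (\<forall>m\<le>n. mstates C I m \<notin> macc C)))"

end

theory Submission
  imports Defs
begin

(* While idle, the machine outputs nothing and runs the monitor D; from the letter on which D flags
   it hands control to C, started afresh on the rest of the input. The assumption g speaks only
   about inputs and is preserved under taking suffixes, so C's guarantee holds for the play from
   the flagging position on, which is the obligation of a simple trigger. For a repeating trigger
   C runs until it first accepts; by tightness this is exactly the end of the unique segment
   tightly satisfying phi, after which D restarts. So every restart point of (D;phi)^* is a
   position where the machine is idle with D in its initial configuration, and every flag from
   such a point is followed by a tight satisfaction of phi. *)

abbreviation suffix :: "nat \<Rightarrow> 'p trace \<Rightarrow> 'p trace" where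
  "suffix d w \<equiv> \<lambda>k. w (d + k)"

lemma ex_ge_add_iff: "(\<exists>l. d + i \<le> l \<and> P l) \<longleftrightarrow> (\<exists>l. i \<le> l \<and> P (d + l :: nat))"
  by (metis add_le_cancel_left le_add1 le_add_diff_inverse order_trans)

lemma all_ge_add_iff: "(\<forall>l. d + i \<le> l \<longrightarrow> P l) \<longleftrightarrow> (\<forall>l. i \<le> l \<longrightarrow> P (d + l :: nat))"
  by (metis add_le_cancel_left le_add1 le_add_diff_inverse order_trans)

lemma all_interval_add_iff:
  "(\<forall>k. d + i \<le> k \<and> k < d + l \<longrightarrow> P k) \<longleftrightarrow> (\<forall>k. i \<le> k \<and> k < l \<longrightarrow> P (d + k :: nat))"
  by (metis add_le_cancel_left add_less_cancel_left le_add1 le_add_diff_inverse order_trans)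

lemma sat_suffix: "sat (suffix d w) i f = sat w (d + i) f"
  by (induction f arbitrary: i) (simp_all add: ex_ge_add_iff all_ge_add_iff all_interval_add_iff)

lemma fsat_suffix: "fsat (suffix d w) i j f = fsat w (d + i) (d + j) f"
  by (induction f arbitrary: i) (simp_all add: ex_ge_add_iff all_interval_add_iff)

lemma tsat_suffix: "tsat (suffix d w) i j f = tsat w (d + i) (d + j) f"
  by (simp add: tsat_def fsat_suffix all_interval_add_iff)

lemma fsat_cong:
  "i \<le> j \<Longrightarrow> (\<And>k. i \<le> k \<Longrightarrow> k \<le> j \<Longrightarrow> w k = w' k) \<Longrightarrow> fsat w i j f = fsat w' i j f"
proof (induction f arbitrary: i)
  case (Until f1 f2)
  have "fsat w l j f2 = fsat w' l j f2" "fsat w l j f1 = fsat w' l j f1" if "i \<le> l" "l \<le> j" for l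
    using Until that by simp_all
  then show ?case by (simp, meson less_imp_le order.trans)
qed auto

lemma tsat_cong:
  assumes "\<And>k. i \<le> k \<Longrightarrow> k \<le> j \<Longrightarrow> w k = w' k"
  shows "tsat w i j f = tsat w' i j f"
proof -
  have "fsat w i k f = fsat w' i k f" if "i \<le> k" "k \<le> j" for k
    using that by (intro fsat_cong) (simp_all add: assms)
  then show ?thesis unfolding tsat_def by auto
qed

lemma tsat_unique: "tsat w i j f \<Longrightarrow> tsat w i k f \<Longrightarrow> j = k"
  unfolding tsat_def by (cases j k rule: linorder_cases) auto

lemma asat_cong: "aatoms a \<subseteq> P \<Longrightarrow> E \<inter> P = E' \<inter> P \<Longrightarrow> asat E a = asat E' a"
  by (induction a) auto

lemma bsat_cong:
  assumes "batoms b \<subseteq> P" and "\<And>n. w n \<inter> P = w' n \<inter> P"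
  shows "bsat w i b = bsat w' i b"
  using assms(1) by (induction b) (simp_all add: asat_cong[OF _ assms(2)])

lemma gsat_cong:
  assumes "gatoms g \<subseteq> P" and "\<And>n. w n \<inter> P = w' n \<inter> P"
  shows "gsat w g = gsat w' g"
  using assms(1) by (induction g) (simp_all add: asat_cong[OF _ assms(2)] bsat_cong[OF _ assms(2)])

lemma bsat_suffix: "bsat (suffix d w) i b = bsat w (d + i) b"
  by (induction b) simp_all

lemma gsat_suffix: "gsat w g \<Longrightarrow> gsat (suffix d w) g"
proof (induction g)
  case (GInf a)
  then have "\<exists>l. d + i \<le> l \<and> asat (w l) a" for i
    by simp
  then have "\<exists>l. i \<le> l \<and> asat (w (d + l)) a" for i
    by (simp only: ex_ge_add_iff)
  then show ?case by simp
qed (simp_all add: bsat_suffix)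

lemma mconf_cong:
  "(\<And>n. w n \<inter> Pin = w' n \<inter> Pin) \<Longrightarrow> mconf Pin D w p n = mconf Pin D w' p n"
  by (induction n) simp_all

lemma mflag_cong:
  "(\<And>n. w n \<inter> Pin = w' n \<inter> Pin) \<Longrightarrow> mflag Pin D w p i = mflag Pin D w' p i"
  unfolding mflag_def using mconf_cong by metis

lemma mconf_bot_after_flag:
  assumes "fst (mconf Pin D s p n) \<in> mF D" and "n < k"
  shows "fst (mconf Pin D s p k) = mbot D"
  using assms(2)
proof (induction k)
  case (Suc k)
  then have "fst (mconf Pin D s p k) \<in> mF D \<or> fst (mconf Pin D s p k) = mbot D"
    using assms(1) by (cases "n = k") auto
  then show ?case
    by (cases "mconf Pin D s p k") (auto simp: mstep_def)
qed simp

lemma mflag_first: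
  assumes "wf_monitor Pin D" and "mflag Pin D s p i" and "p \<le> k" and "k < i"
  shows "\<not> mflag Pin D s p k"
  using assms mconf_bot_after_flag[of Pin D s p "Suc (k - p)" "Suc (i - p)"]
  unfolding mflag_def wf_monitor_def by auto

abbreviation minit :: "('q, 'v, 'p) monitor \<Rightarrow> 'q \<times> 'v" where
  "minit D \<equiv> (mq0 D, mth0 D)"

definition ctrl_step :: "('q, 'v, 'p) monitor \<Rightarrow> ('s, 'p) mealy \<Rightarrow> 's set \<Rightarrow> 's \<Rightarrow> 'p set
    \<Rightarrow> 'p set \<times> ('q \<times> 'v) \<times> 's \<times> bool" where
  "ctrl_step D C A x E =
     (fst (mdelta C x E), minit D, snd (mdelta C x E), snd (mdelta C x E) \<notin> A)"

(* A is the set of C-states on reaching which control returns to the monitor: none for a simple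
   trigger, the accepting states for a repeating one. C reads the very letter on which D flags,
   because the obligation of the trigger starts at the flagging position. *)
fun trigger_delta :: "'p set \<Rightarrow> ('q, 'v, 'p) monitor \<Rightarrow> ('s, 'p) mealy \<Rightarrow> 's set
    \<Rightarrow> ('q \<times> 'v) \<times> 's \<times> bool \<Rightarrow> 'p set \<Rightarrow> 'p set \<times> ('q \<times> 'v) \<times> 's \<times> bool" where
  "trigger_delta Pin D C A (c, x, True) E = ctrl_step D C A x E"
| "trigger_delta Pin D C A (c, x, False) E =
     (if fst (mstep D (E \<inter> Pin) c) \<in> mF D then ctrl_step D C A (ms0 C) E
      else ({}, mstep D (E \<inter> Pin) c, x, False))"

definition trigger_mealy :: "'p set \<Rightarrow> ('q, 'v, 'p) monitor \<Rightarrow> ('s, 'p) mealy \<Rightarrow> 's set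
    \<Rightarrow> (('q \<times> 'v) \<times> 's \<times> bool, 'p) mealy" where
  "trigger_mealy Pin D C A =
     \<lparr>ms0 = (minit D, ms0 C, False), mdelta = trigger_delta Pin D C A, macc = {}\<rparr>"

lemma wf_trigger_mealy: "wf_mealy Pin Pout C \<Longrightarrow> wf_mealy Pin Pout (trigger_mealy Pin D C A)"
  unfolding wf_mealy_def
proof (intro allI impI)
  fix st I assume "\<forall>s I. I \<subseteq> Pin \<longrightarrow> fst (mdelta C s I) \<subseteq> Pout" and "I \<subseteq> Pin"
  then show "fst (mdelta (trigger_mealy Pin D C A) st I) \<subseteq> Pout"
    by (cases st rule: prod_cases3, rename_tac active, case_tac active)
      (auto simp: trigger_mealy_def ctrl_step_def)
qed

lemma mstates_trigger_mealy_0: "mstates (trigger_mealy Pin D C A) I 0 = (minit D, ms0 C, False)"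
  by (simp add: trigger_mealy_def)

lemma mstates_trigger_mealy_monitoring:
  assumes "mstates (trigger_mealy Pin D C A) I p = (minit D, x, False)"
    and "\<And>m. m < n \<Longrightarrow> fst (mconf Pin D I p (Suc m)) \<notin> mF D"
  shows "mstates (trigger_mealy Pin D C A) I (p + n) = (mconf Pin D I p n, x, False)"
  using assms(2)
proof (induction n)
  case 0
  then show ?case using assms(1) by simp
next
  case (Suc n)
  then show ?case by (simp add: trigger_mealy_def)
qed

lemma mdelta_trigger_mealy_controlling:
  assumes "mstates (trigger_mealy Pin D C A) I i = (c, x, False)"
    and "fst (mstep D (I i \<inter> Pin) c) \<in> mF D"
    and "\<And>k. k < m \<Longrightarrow> mstates C (suffix i I) (Suc k) \<notin> A"
  shows "mdelta (trigger_mealy Pin D C A) (mstates (trigger_mealy Pin D C A) I (i + m)) (I (i + m))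
    = ctrl_step D C A (mstates C (suffix i I) m) (I (i + m))"
  using assms(3)
proof (induction m)
  case 0
  then show ?case using assms(1,2) by (simp add: trigger_mealy_def)
next
  case (Suc m)
  have "mstates (trigger_mealy Pin D C A) I (Suc (i + m))
      = snd (ctrl_step D C A (mstates C (suffix i I) m) (I (i + m)))"
    using Suc by simp
  also have "\<dots> = (minit D, mstates C (suffix i I) (Suc m), True)"
    using Suc.prems[of m] by (simp add: ctrl_step_def)
  finally show ?case by (simp add: trigger_mealy_def)
qed

lemma trigger_mealy_after_flag:
  assumes "wf_monitor Pin D"
    and "mstates (trigger_mealy Pin D C A) I p = (minit D, x, False)"
    and "mflag Pin D I p i"
    and "\<And>k. k < m \<Longrightarrow> mstates C (suffix i I) (Suc k) \<notin> A"
  shows "mword (trigger_mealy Pin D C A) I (i + m) = mword C (suffix i I) m"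
    and "mstates (trigger_mealy Pin D C A) I (Suc (i + m)) =
      (minit D, mstates C (suffix i I) (Suc m), mstates C (suffix i I) (Suc m) \<notin> A)"
proof -
  let ?M = "trigger_mealy Pin D C A"
  have "p \<le> i" using assms(3) by (simp add: mflag_def)
  have "\<not> mflag Pin D I p (p + k)" if "k < i - p" for k
    using mflag_first[OF assms(1,3)] that by simp
  then have "mstates ?M I (p + (i - p)) = (mconf Pin D I p (i - p), x, False)"
    by (intro mstates_trigger_mealy_monitoring[OF assms(2)]) (simp add: mflag_def)
  then have idle: "mstates ?M I i = (mconf Pin D I p (i - p), x, False)"
    using \<open>p \<le> i\<close> by simp
  have "fst (mstep D (I i \<inter> Pin) (mconf Pin D I p (i - p))) \<in> mF D"
    using assms(3) \<open>p \<le> i\<close> by (simp add: mflag_def Suc_diff_le)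
  from mdelta_trigger_mealy_controlling[OF idle this assms(4)]
  have "mdelta ?M (mstates ?M I (i + m)) (I (i + m))
      = ctrl_step D C A (mstates C (suffix i I) m) (I (i + m))"
    by simp
  then show "mword ?M I (i + m) = mword C (suffix i I) m"
    and "mstates ?M I (Suc (i + m)) =
      (minit D, mstates C (suffix i I) (Suc m), mstates C (suffix i I) (Suc m) \<notin> A)"
    by (simp_all add: mword_def ctrl_step_def)
qed

lemma mword_inter_inputs:
  "Pin \<inter> Pout = {} \<Longrightarrow> wf_mealy Pin Pout M \<Longrightarrow> I n \<subseteq> Pin \<Longrightarrow> mword M I n \<inter> Pin = I n"
  unfolding wf_mealy_def mword_def by blast

lemma mflag_mword_iff:
  assumes "Pin \<inter> Pout = {}" and "wf_mealy Pin Pout M" and "\<forall>n. I n \<subseteq> Pin"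
  shows "mflag Pin D (mword M I) p i = mflag Pin D I p i"
  by (rule mflag_cong) (simp add: mword_inter_inputs[OF assms(1,2)] assms(3) Int_absorb2)

lemma gsat_mword_iff:
  assumes "Pin \<inter> Pout = {}" and "gatoms g \<subseteq> Pin" and "wf_mealy Pin Pout M" and "\<forall>n. I n \<subseteq> Pin"
  shows "gsat (mword M I) g = gsat I g"
  by (rule gsat_cong[OF assms(2)]) (simp add: mword_inter_inputs[OF assms(1,3)] assms(4) Int_absorb2)

lemma gsat_mword_suffix:
  assumes "Pin \<inter> Pout = {}" and "gatoms g \<subseteq> Pin"
    and "wf_mealy Pin Pout M" and "wf_mealy Pin Pout C" and "\<forall>n. I n \<subseteq> Pin"
    and "gsat (mword M I) g"
  shows "gsat (mword C (suffix i I)) g"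
  using assms gsat_suffix[of I g i] by (simp add: gsat_mword_iff)

lemma trigger_mealy_realises_trig_sat:
  assumes disj: "Pin \<inter> Pout = {}" and gat: "gatoms g \<subseteq> Pin"
    and wfD: "wf_monitor Pin D" and wfC: "wf_mealy Pin Pout C"
    and real: "realises Pin C (\<lambda>w. gsat w g \<longrightarrow> sat w 0 f)"
  shows "realises Pin (trigger_mealy Pin D C {}) (\<lambda>w. gsat w g \<longrightarrow> trig_sat Pin D f w 0)"
  unfolding realises_def trig_sat_def
proof (intro allI impI)
  fix I j
  let ?M = "trigger_mealy Pin D C {}"
  assume I: "\<forall>n. I n \<subseteq> Pin" and "gsat (mword ?M I) g" and "mflag Pin D (mword ?M I) 0 j"
  moreover note wfM = wf_trigger_mealy[OF wfC]
  ultimately have "gsat (mword C (suffix j I)) g" and flag: "mflag Pin D I 0 j"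
    using gsat_mword_suffix[OF disj gat wfM wfC] mflag_mword_iff[OF disj wfM] by blast+
  then have "sat (mword C (suffix j I)) 0 f"
    using real I unfolding realises_def by simp
  moreover have "mword C (suffix j I) = suffix j (mword ?M I)"
    using trigger_mealy_after_flag(1)[OF wfD mstates_trigger_mealy_0 flag, where A = "{}"]
    by auto
  ultimately have "sat (suffix j (mword ?M I)) 0 f"
    by simp
  then show "sat (mword ?M I) j f"
    by (simp add: sat_suffix)
qed

lemma trigger_mealy_episode:
  fixes Pin Pout :: "'p set" and D :: "('q, 'v, 'p) monitor" and C :: "('s, 'p) mealy"
    and I :: "'p trace"
  defines "M \<equiv> trigger_mealy Pin D C (macc C)"
  assumes disj: "Pin \<inter> Pout = {}" and gat: "gatoms g \<subseteq> Pin"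
    and wfD: "wf_monitor Pin D" and wfC: "wf_mealy Pin Pout C"
    and tight: "tightly_realises Pin C g f"
    and I: "\<forall>n. I n \<subseteq> Pin" and gw: "gsat (mword M I) g"
    and idle: "mstates M I p = (minit D, x, False)" and flag: "mflag Pin D I p i"
  shows "\<exists>n. tsat (mword M I) i (i + n) f \<and> (\<exists>y. mstates M I (Suc (i + n)) = (minit D, y, False))"
proof -
  have "gsat (mword C (suffix i I)) g"
    using gsat_mword_suffix[OF disj gat _ wfC I] wf_trigger_mealy[OF wfC] gw M_def by blast
  then obtain n where acc: "mstates C (suffix i I) (Suc n) \<in> macc C"
    and ts: "tsat (mword C (suffix i I)) 0 n f"
    and nacc: "\<forall>m\<le>n. mstates C (suffix i I) m \<notin> macc C"
    using tight[unfolded tightly_realises_def, THEN conjunct2, rule_format, of "suffix i I"] I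
    by blast
  have "k < m \<Longrightarrow> m \<le> n \<Longrightarrow> mstates C (suffix i I) (Suc k) \<notin> macc C" for k m
    using nacc[rule_format, of "Suc k"] by simp
  note run = trigger_mealy_after_flag[OF wfD idle[unfolded M_def] flag this]
  have "suffix i (mword M I) k = mword C (suffix i I) k" if "k \<le> n" for k
    using run(1)[OF _ that] M_def by simp
  then have "tsat (suffix i (mword M I)) 0 n f"
    using ts tsat_cong[of 0 n "suffix i (mword M I)" "mword C (suffix i I)" f] by simp
  then have "tsat (mword M I) i (i + n) f"
    by (simp add: tsat_suffix)
  moreover have "mstates M I (Suc (i + n)) = (minit D, mstates C (suffix i I) (Suc n), False)"
    using run(2)[OF _ order.refl] acc M_def by simp
  ultimately show ?thesis by blast
qed

lemma trigger_mealy_realises_rep_sat: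
  assumes disj: "Pin \<inter> Pout = {}" and gat: "gatoms g \<subseteq> Pin"
    and wfD: "wf_monitor Pin D" and wfC: "wf_mealy Pin Pout C"
    and tight: "tightly_realises Pin C g f"
  shows "realises Pin (trigger_mealy Pin D C (macc C)) (\<lambda>w. gsat w g \<longrightarrow> rep_sat Pin D f w)"
  unfolding realises_def
proof (intro allI impI)
  fix I
  let ?M = "trigger_mealy Pin D C (macc C)"
  let ?w = "mword ?M I"
  assume I: "\<forall>n. I n \<subseteq> Pin" and "gsat ?w g"
  note mflag_iff = mflag_mword_iff[OF disj wf_trigger_mealy[OF wfC] I]
  note episode = trigger_mealy_episode[OF disj gat wfD wfC tight I \<open>gsat ?w g\<close>]
  have idle: "\<exists>x. mstates ?M I p = (minit D, x, False)" if "restart Pin D f ?w p" for p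
    using that
  proof (induction rule: restart.induct)
    case restart0
    show ?case using mstates_trigger_mealy_0 by blast
  next
    case (restartS p k)
    then obtain x j where "mstates ?M I p = (minit D, x, False)"
      and "mflag Pin D I p j" and "tsat ?w j k f"
      unfolding dseq_def mflag_iff by blast
    \<comment> \<open>k is where C accepted and the machine went idle: tight satisfaction fixes the end.\<close>
    with episode tsat_unique show ?case by metis
  qed
  show "rep_sat Pin D f ?w"
    unfolding rep_sat_def dseq_def mflag_iff
  proof (intro allI impI)
    fix p i assume "restart Pin D f ?w p" and "p \<le> i" and "mflag Pin D I p i"
    with idle episode obtain n where "tsat ?w i (i + n) f" by metis
    with \<open>p \<le> i\<close> \<open>mflag Pin D I p i\<close>
    show "\<exists>k\<ge>i. \<exists>j. p \<le> j \<and> j \<le> k \<and> mflag Pin D I p j \<and> tsat ?w j k f"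
      by (intro exI[of _ "i + n"]) auto
  qed
qed

theorem theorem4:
  fixes Pin Pout :: "'p set"
    and g :: "'p agamma"
    and D :: "('q, 'v, 'p) monitor"
    and C :: "('s, 'p) mealy"
    and f :: "'p ltl"
  assumes "Pin \<inter> Pout = {}"
    and "gatoms g \<subseteq> Pin"
    and "wf_monitor Pin D"
    and "wf_mealy Pin Pout C"
  shows "(realises Pin C (\<lambda>w. gsat w g \<longrightarrow> sat w 0 f) \<longrightarrow>
            (\<exists>M :: (('q \<times> 'v) \<times> 's \<times> bool, 'p) mealy. wf_mealy Pin Pout M \<and>
               realises Pin M (\<lambda>w. gsat w g \<longrightarrow> trig_sat Pin D f w 0)))
       \<and> (cosafety f \<longrightarrow> tightly_realises Pin C g f \<longrightarrow>
            (\<exists>M :: (('q \<times> 'v) \<times> 's \<times> bool, 'p) mealy. wf_mealy Pin Pout M \<and>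
               realises Pin M (\<lambda>w. gsat w g \<longrightarrow> rep_sat Pin D f w)))"
  \<comment> \<open>The construction does not need f to be co-safety; tight realisation is what matters.\<close>
  using trigger_mealy_realises_trig_sat[OF assms] trigger_mealy_realises_rep_sat[OF assms]
    wf_trigger_mealy[OF assms(4)]
  by blast

end
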